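(* Let $q$ be a prime power and let $\mathcal{C}_{\mathsf{out}}$ be an $[n_{\mathsf{out}},k_{\mathsf{out}}]$ linear code over $\mathbb{F}_q$ with generator matrix $\mathbf{G}_{\mathsf{out}}\in\mathbb{F}_q^{k_{\mathsf{out}}\times n_{\mathsf{out}}}$, and let $\mathbb{I}_{\mathsf{out}}$ be the set of its information sets. Let $k_{\mathsf{in}}\leq k_{\mathsf{out}}\leq s$, let $\mathbf{g}\in\mathbb{F}_{q^s}^{k_{\mathsf{out}}}$ have entries linearly independent over $\mathbb{F}_q$, and let $\mathbf{G}_{\mathsf{in}}$ be the generator matrix of the Gabidulin code $\mathcal{C}_{\mathsf{in}}=\mathsf{Gab}(k_{\mathsf{out}},k_{\mathsf{in}},\mathbf{g})$ over $\mathbb{F}_{q^s}$. Then for every $\mathcal{I}\in\mathbb{I}_{\mathsf{out}}$, the code obtained from the row span of $\mathbf{G}_{\mathsf{in}}\cdot\mathbf{G}_{\mathsf{out}}$ by restricting every codeword to the positions in $\mathcal{I}$ is a Gabidulin code $\mathsf{Gab}(k_{\mathsf{out}},k_{\mathsf{in}},\mathbf{g}')$ over $\mathbb{F}_{q^s}$ for some $\mathbf{g}'\in\mathbb{F}_{q^s}^{k_{\mathsf{out}}}$ with entries linearly independent over $\mathbb{F}_q$.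
   Context: An information set of an $[N,k]$ linear code $\mathcal{C}$ is a set $\mathcal{I}\subseteq[N]$ with $|\mathcal{I}|=k$ such that the restriction of $\mathcal{C}$ to the coordinates in $\mathcal{I}$ has dimension $k$. Gabidulin code: for $\mathbf{g}=(g_1,\dots,g_N)\in\mathbb{F}_{q^s}^N$ with $g_i$ linearly independent over $\mathbb{F}_q$, $\mathsf{Gab}(N,k,\mathbf{g})$ is the $[N,k]$ code over $\mathbb{F}_{q^s}$ spanned by the rows of the $k\times N$ matrix whose $(i,j)$ entry is $g_j^{q^{i-1}}$ (this matrix is called its generator matrix). *)

theory Defs
  imports Main
begin

text \<open>The big field F_{q^s} is a finite field type 'a; the small field F_q is
a subfield K of it with card K = q. A vector of length N is a function nat => 'a that is
zero at coordinates >= N. A k x N matrix is a function nat => nat => 'a (row, column),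
with indices starting at 0.\<close>

definition is_subfield :: "'a::field set \<Rightarrow> bool" where
  "is_subfield K \<longleftrightarrow> 0 \<in> K \<and> 1 \<in> K \<and>
     (\<forall>x\<in>K. \<forall>y\<in>K. x + y \<in> K \<and> x * y \<in> K) \<and>
     (\<forall>x\<in>K. - x \<in> K \<and> inverse x \<in> K)"

definition elems_lin_indep :: "'a::field set \<Rightarrow> nat \<Rightarrow> (nat \<Rightarrow> 'a) \<Rightarrow> bool" where
  "elems_lin_indep F m g \<longleftrightarrow>
     (\<forall>c. (\<forall>i<m. c i \<in> F) \<and> (\<Sum>i<m. c i * g i) = 0 \<longrightarrow> (\<forall>i<m. c i = 0))"

definition vecs_lin_indep :: "'a::field set \<Rightarrow> nat \<Rightarrow> nat \<Rightarrow> (nat \<Rightarrow> nat \<Rightarrow> 'a) \<Rightarrow> bool" where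
  "vecs_lin_indep F m N v \<longleftrightarrow>
     (\<forall>c. (\<forall>i<m. c i \<in> F) \<and> (\<forall>j<N. (\<Sum>i<m. c i * v i j) = 0) \<longrightarrow> (\<forall>i<m. c i = 0))"

definition row_span :: "'a::field set \<Rightarrow> nat \<Rightarrow> nat \<Rightarrow> (nat \<Rightarrow> nat \<Rightarrow> 'a) \<Rightarrow> (nat \<Rightarrow> 'a) set" where
  "row_span F k N G =
     {(\<lambda>j. if j < N then (\<Sum>i<k. m i * G i j) else 0) | m. \<forall>i<k. m i \<in> F}"

definition dim_over :: "'a::field set \<Rightarrow> nat \<Rightarrow> (nat \<Rightarrow> 'a) set \<Rightarrow> nat" where
  "dim_over F N C = Max {m. \<exists>v. (\<forall>i<m. v i \<in> C) \<and> vecs_lin_indep F m N v}"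

definition restrict_vec :: "nat set \<Rightarrow> (nat \<Rightarrow> 'a::zero) \<Rightarrow> nat \<Rightarrow> 'a" where
  "restrict_vec I v = (\<lambda>j. if j < card I then v (sorted_list_of_set I ! j) else 0)"

definition restrict_code :: "nat set \<Rightarrow> (nat \<Rightarrow> 'a::zero) set \<Rightarrow> (nat \<Rightarrow> 'a) set" where
  "restrict_code I C = restrict_vec I ` C"

definition info_set :: "'a::field set \<Rightarrow> nat \<Rightarrow> nat \<Rightarrow> (nat \<Rightarrow> 'a) set \<Rightarrow> nat set \<Rightarrow> bool" where
  "info_set F N k C I \<longleftrightarrow> I \<subseteq> {..<N} \<and> card I = k \<and> dim_over F k (restrict_code I C) = k"

definition gab_gen :: "nat \<Rightarrow> (nat \<Rightarrow> 'a::field) \<Rightarrow> nat \<Rightarrow> nat \<Rightarrow> 'a" where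
  "gab_gen q g = (\<lambda>i j. g j ^ (q ^ i))"

definition gab_code :: "nat \<Rightarrow> nat \<Rightarrow> nat \<Rightarrow> (nat \<Rightarrow> 'a::field) \<Rightarrow> (nat \<Rightarrow> 'a) set" where
  "gab_code q N k g = row_span UNIV k N (gab_gen q g)"

definition mat_mult :: "nat \<Rightarrow> (nat \<Rightarrow> nat \<Rightarrow> 'a::comm_ring_1) \<Rightarrow> (nat \<Rightarrow> nat \<Rightarrow> 'a) \<Rightarrow> nat \<Rightarrow> nat \<Rightarrow> 'a" where
  "mat_mult m A B = (\<lambda>i j. \<Sum>l<m. A i l * B l j)"

end

(* Let sigma enumerate I increasingly. The map x |-> x ^ q ^ i is additive and fixes K = F_q
   pointwise (card K is a power of the characteristic, because K is an additive group all of whose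
   non-zero elements have order CHAR), so for G_out over K the column sigma j of G_in * G_out is
   (g'_j ^ q ^ i)_i with g'_j = sum_l g_l * G_out l (sigma j): restricted to I, the product code is
   Gab(k_out, k_in, g').
   If sum_j c_j * g'_j = 0 with c over K, the independence of g forces the columns I of G_out to
   annihilate c, so every codeword of C_out restricted to I is orthogonal to c. For c <> 0 these
   codewords lie in a hyperplane of K ^ k_out, which by counting holds fewer than k_out independent
   vectors; this contradicts I being an information set. *)

theory Submission
  imports Defs "HOL-Library.FuncSet" "HOL-Number_Theory.Cong"
begin

lemma subfield_closed:
  assumes "is_subfield K"
  shows subfield_zero: "0 \<in> K" and subfield_one: "1 \<in> K"
    and subfield_add: "x \<in> K \<Longrightarrow> y \<in> K \<Longrightarrow> x + y \<in> K"
    and subfield_mult: "x \<in> K \<Longrightarrow> y \<in> K \<Longrightarrow> x * y \<in> K"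
    and subfield_diff: "x \<in> K \<Longrightarrow> y \<in> K \<Longrightarrow> x - y \<in> K"
    and subfield_inverse: "x \<in> K \<Longrightarrow> inverse x \<in> K"
  using assms unfolding is_subfield_def by (metis diff_conv_add_uminus)+

lemma subfield_sum:
  assumes "is_subfield K" "\<And>i. i \<in> A \<Longrightarrow> f i \<in> K"
  shows "sum f A \<in> K"
  using assms(2)
  by (induction A rule: infinite_finite_induct) (auto intro: subfield_closed[OF assms(1)])

subsection \<open>Additive subgroups in prime characteristic\<close>

definition add_closed :: "'a::monoid_add set \<Rightarrow> bool" where
  "add_closed H \<longleftrightarrow> 0 \<in> H \<and> (\<forall>x\<in>H. \<forall>y\<in>H. x + y \<in> H)"

definition add_extend :: "'a::semiring_1 set \<Rightarrow> 'a \<Rightarrow> 'a set" where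
  "add_extend H x = {h + of_nat n * x | h n. h \<in> H}"

lemma add_closed_of_nat_mult:
  fixes H :: "'a::semiring_1 set"
  assumes "add_closed H" "h \<in> H"
  shows "of_nat n * h \<in> H"
  using assms by (induction n) (auto simp: add_closed_def distrib_right)

lemma add_closed_uminus:
  fixes H :: "'a::ring_1 set"
  assumes "add_closed H" "CHAR('a) > 0" "h \<in> H"
  shows "- h \<in> H"
proof -
  have "of_nat (CHAR('a) - 1) + 1 = (of_nat CHAR('a) :: 'a)"
    using assms(2) by (simp add: of_nat_diff)
  then have "of_nat (CHAR('a) - 1) = (- 1 :: 'a)"
    by (simp add: eq_neg_iff_add_eq_0)
  then have "- h = of_nat (CHAR('a) - 1) * h"
    by simp
  also have "\<dots> \<in> H"
    by (rule add_closed_of_nat_mult[OF assms(1,3)])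
  finally show ?thesis .
qed

lemma add_closed_cancel_of_nat_mult:
  fixes H :: "'a::ring_1 set"
  assumes "prime CHAR('a)" "add_closed H" "of_nat m * x \<in> H" "\<not> CHAR('a) dvd m"
  shows "x \<in> H"
proof -
  have "coprime m CHAR('a)"
    using prime_imp_coprime[OF assms(1,4)] by (simp add: coprime_commute)
  then obtain m' where "[m * m' = 1] (mod CHAR('a))"
    using cong_solve_coprime_nat by auto
  then have "of_nat (m' * m) = (of_nat 1 :: 'a)"
    by (simp only: of_nat_eq_iff_cong_CHAR mult.commute)
  then have "x = of_nat m' * (of_nat m * x)"
    by (simp add: mult.assoc[symmetric])
  also have "\<dots> \<in> H"
    by (rule add_closed_of_nat_mult[OF assms(2,3)])
  finally show ?thesis .
qed

lemma add_closed_add_extend: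
  fixes H :: "'a::semiring_1 set"
  assumes "add_closed H"
  shows "add_closed (add_extend H x)"
  unfolding add_closed_def add_extend_def
proof safe
  show "\<exists>h n. 0 = h + of_nat n * x \<and> h \<in> H"
    using assms by (intro exI[of _ 0]) (auto simp: add_closed_def)
next
  fix h h' n n' assume "h \<in> H" "h' \<in> H"
  then show "\<exists>h'' n''. h + of_nat n * x + (h' + of_nat n' * x) = h'' + of_nat n'' * x \<and> h'' \<in> H"
    using assms by (intro exI[of _ "h + h'"] exI[of _ "n + n'"])
      (auto simp: add_closed_def algebra_simps)
qed

lemma add_extend_subset:
  fixes K :: "'a::semiring_1 set"
  assumes "add_closed K" "H \<subseteq> K" "x \<in> K"
  shows "add_extend H x \<subseteq> K"
  using assms add_closed_of_nat_mult[OF assms(1,3)]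
  by (auto simp: add_extend_def add_closed_def)

lemma insert_subset_add_extend:
  fixes H :: "'a::semiring_1 set"
  assumes "add_closed H"
  shows "insert x H \<subseteq> add_extend H x"
proof -
  have "h = h + of_nat 0 * x" "x = 0 + of_nat 1 * x" for h
    by simp_all
  then show ?thesis
    using assms unfolding add_extend_def add_closed_def by blast
qed

lemma card_add_extend:
  fixes H :: "'a::ring_1 set"
  assumes p: "prime CHAR('a)" and H: "finite H" "add_closed H" and x: "x \<notin> H"
  shows "card (add_extend H x) = card H * CHAR('a)"
proof -
  let ?p = "CHAR('a)" and ?f = "\<lambda>(h, n). h + of_nat n * x"
  have p_pos: "?p > 0" using p prime_gt_0_nat by blast
  have "add_extend H x = ?f ` (H \<times> {..<?p})"
  proof (intro equalityI subsetI)
    fix y assume "y \<in> add_extend H x"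
    then obtain h n where h: "h \<in> H" and y: "y = h + of_nat n * x"
      by (auto simp: add_extend_def)
    have "of_nat n = (of_nat (n mod ?p) :: 'a)"
      by (simp add: of_nat_eq_iff_cong_CHAR cong_def)
    then have "y = ?f (h, n mod ?p)"
      using y by simp
    moreover have "(h, n mod ?p) \<in> H \<times> {..<?p}"
      using h p_pos by simp
    ultimately show "y \<in> ?f ` (H \<times> {..<?p})" by (rule image_eqI)
  qed (unfold add_extend_def, fast)
  moreover have "inj_on ?f (H \<times> {..<?p})"
  proof -
    have no_collision: False
      if "h + of_nat a * x = h' + of_nat b * x" "b < a" "a < ?p" "h \<in> H" "h' \<in> H"
      for h h' a b
    proof -
      have "of_nat (a - b) * x = h' + - h"
        using that(1,2) by (simp add: add.commute add_diff_eq add_implies_diff left_diff_distrib)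
      moreover have "h' + - h \<in> H"
        using add_closed_uminus[OF H(2) p_pos that(4)] that(5) H(2) unfolding add_closed_def by blast
      moreover have "\<not> ?p dvd a - b"
        using that(2,3) by (auto dest: dvd_imp_le)
      ultimately show False
        using add_closed_cancel_of_nat_mult[OF p H(2), of "a - b" x] x by argo
    qed
    show ?thesis
    proof (rule inj_onI, clarsimp)
      fix h a h' b
      assume "h \<in> H" "a < ?p" "h' \<in> H" "b < ?p" and eq: "h + of_nat a * x = h' + of_nat b * x"
      then have "a = b"
        using no_collision[of h a h' b] no_collision[of h' b h a] by (metis linorder_neqE_nat)
      then show "h = h' \<and> a = b"
        using eq by simp
    qed
  qed
  ultimately show ?thesis
    using H(1) by (simp add: card_image card_cartesian_product)
qed

lemma card_add_closed_prime_power: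
  fixes K :: "'a::ring_1 set"
  assumes p: "prime CHAR('a)" and K: "finite K" "add_closed K"
  shows "\<exists>r. card K = CHAR('a) ^ r"
proof -
  have "\<exists>H r. S \<subseteq> H \<and> H \<subseteq> K \<and> add_closed H \<and> card H = CHAR('a) ^ r" if "S \<subseteq> K" for S
    using finite_subset[OF that K(1)] that
  proof (induction S rule: finite_induct)
    case empty
    then show ?case
      using K(2) by (intro exI[of _ "{0}"] exI[of _ 0]) (auto simp: add_closed_def)
  next
    case (insert x S)
    then obtain H r where H: "S \<subseteq> H" "H \<subseteq> K" "add_closed H" "card H = CHAR('a) ^ r"
      by auto
    show ?case
    proof (cases "x \<in> H")
      case True
      then show ?thesis using H by auto
    next
      case False
      have "insert x S \<subseteq> add_extend H x"
        using H(1) insert_subset_add_extend[OF H(3), of x] by blast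
      moreover have "add_extend H x \<subseteq> K"
        using add_extend_subset[OF K(2) H(2)] insert.prems by blast
      moreover have "card (add_extend H x) = CHAR('a) ^ Suc r"
        using card_add_extend[OF p finite_subset[OF H(2) K(1)] H(3) False] H(4) by simp
      ultimately show ?thesis
        using add_closed_add_extend[OF H(3), of x]
        by (intro exI[of _ "add_extend H x"] exI[of _ "Suc r"]) blast
    qed
  qed
  from this[OF order_refl] obtain H r where "K \<subseteq> H" "H \<subseteq> K" "card H = CHAR('a) ^ r"
    by blast
  then show ?thesis
    using subset_antisym by blast
qed

subsection \<open>The Frobenius map of a finite subfield\<close>

lemma prime_CHAR_finite_field: "prime CHAR('a::{finite,field})"
  by (rule prime_CHAR_semidom[OF finite_imp_CHAR_pos[OF finite_UNIV]])

lemma subfield_add_closed: "is_subfield K \<Longrightarrow> add_closed K"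
  by (simp add: add_closed_def subfield_closed)

lemma card_subfield_prime_power:
  fixes K :: "'a::{finite,field} set"
  assumes "is_subfield K"
  shows "\<exists>r. card K = CHAR('a) ^ r"
  using card_add_closed_prime_power[OF prime_CHAR_finite_field finite subfield_add_closed[OF assms]] .

lemma power_card_subfield:
  fixes K :: "'a::field set"
  assumes K: "is_subfield K" "finite K" and x: "x \<in> K"
  shows "x ^ card K = x"
proof (cases "x = 0")
  case True
  then show ?thesis using x K(2) by (auto simp: card_gt_0_iff)
next
  case False
  have "(\<Prod>y\<in>K - {0}. x * y) = (\<Prod>y\<in>K - {0}. y)"
    by (rule prod.reindex_bij_witness[of _ "\<lambda>y. y / x" "\<lambda>y. x * y"])
      (use False x subfield_closed[OF K(1)] in \<open>auto simp: divide_inverse\<close>)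
  moreover have "(\<Prod>y\<in>K - {0}. x * y) = x ^ card (K - {0}) * (\<Prod>y\<in>K - {0}. y)"
    by (simp add: prod.distrib)
  moreover have "(\<Prod>y\<in>K - {0}. y) \<noteq> 0"
    using K(2) by simp
  ultimately have "x ^ card (K - {0}) = 1"
    by simp
  moreover have "card K = Suc (card (K - {0}))"
    by (rule card_Suc_Diff1[OF K(2) subfield_zero[OF K(1)], symmetric])
  ultimately show ?thesis by simp
qed

lemma power_card_power_subfield:
  fixes K :: "'a::field set"
  assumes "is_subfield K" "finite K" "x \<in> K"
  shows "x ^ (card K ^ i) = x"
proof (induction i)
  case (Suc i)
  then show ?case
    using power_card_subfield[OF assms] by (simp add: power_mult mult.commute)
qed simp

lemma frobenius_sum_subfield:
  fixes K :: "'a::{finite,field} set"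
  assumes K: "is_subfield K" and b: "\<forall>l\<in>A. b l \<in> K"
  shows "(\<Sum>l\<in>A. a l * b l) ^ (card K ^ i) = (\<Sum>l\<in>A. a l ^ (card K ^ i) * b l)"
proof -
  obtain r where "card K = CHAR('a) ^ r"
    using card_subfield_prime_power[OF K] by blast
  then have "card K ^ i = CHAR('a) ^ (r * i)"
    by (simp add: power_mult)
  then have "(\<Sum>l\<in>A. a l * b l) ^ (card K ^ i) = (\<Sum>l\<in>A. (a l * b l) ^ (card K ^ i))"
    by (rule freshmans_dream_sum'[OF prime_CHAR_finite_field])
  also have "\<dots> = (\<Sum>l\<in>A. a l ^ (card K ^ i) * b l)"
    using b power_card_power_subfield[OF K finite] by (simp add: power_mult_distrib)
  finally show ?thesis .
qed

subsection \<open>Independent vectors in a hyperplane\<close>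

lemma card_hyperplane_le:
  fixes K :: "'a::field set"
  assumes K: "finite K" and c: "j0 < N" "c j0 \<noteq> 0"
  shows "card {w \<in> {..<N} \<rightarrow>\<^sub>E K. (\<Sum>j<N. c j * w j) = 0} \<le> card K ^ (N - 1)"
proof -
  let ?S = "{w \<in> {..<N} \<rightarrow>\<^sub>E K. (\<Sum>j<N. c j * w j) = 0}" and ?R = "{..<N} - {j0}"
  have "inj_on (\<lambda>w. restrict w ?R) ?S"
  proof (rule inj_onI)
    fix w w' assume w: "w \<in> ?S" and w': "w' \<in> ?S" and eq: "restrict w ?R = restrict w' ?R"
    have off: "w j = w' j" if "j \<in> ?R" for j
      using fun_cong[OF eq, of j] that by simp
    have split: "(\<Sum>j<N. c j * u j) = c j0 * u j0 + (\<Sum>j\<in>?R. c j * u j)" for u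
      by (rule sum.remove) (use c(1) in auto)
    have "c j0 * w j0 + (\<Sum>j\<in>?R. c j * w j) = c j0 * w' j0 + (\<Sum>j\<in>?R. c j * w' j)"
      using w w' unfolding split by simp
    moreover have "(\<Sum>j\<in>?R. c j * w j) = (\<Sum>j\<in>?R. c j * w' j)"
      using off by simp
    ultimately have "w j0 = w' j0"
      using c(2) by simp
    then show "w = w'"
      using w w' off by (intro PiE_ext[of w "{..<N}" "\<lambda>_. K"]) auto
  qed
  moreover have "(\<lambda>w. restrict w ?R) ` ?S \<subseteq> ?R \<rightarrow>\<^sub>E K"
  proof (rule image_subsetI)
    fix w assume "w \<in> ?S"
    then have "\<forall>j\<in>?R. w j \<in> K"
      by (auto dest: PiE_mem)
    then show "restrict w ?R \<in> ?R \<rightarrow>\<^sub>E K"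
      by (simp add: restrict_PiE_iff)
  qed
  ultimately have "card ?S \<le> card (?R \<rightarrow>\<^sub>E K)"
    using K by (intro card_inj_on_le) (auto intro: finite_PiE)
  also have "\<dots> = card K ^ (N - 1)"
    using c(1) by (simp add: card_PiE)
  finally show ?thesis .
qed

lemma inj_on_lin_comb:
  assumes K: "is_subfield K" and indep: "vecs_lin_indep K m N v"
  shows "inj_on (\<lambda>a. restrict (\<lambda>j. \<Sum>i<m. a i * v i j) {..<N}) ({..<m} \<rightarrow>\<^sub>E K)"
proof (rule inj_onI)
  fix a b assume a: "a \<in> {..<m} \<rightarrow>\<^sub>E K" and b: "b \<in> {..<m} \<rightarrow>\<^sub>E K"
    and eq: "restrict (\<lambda>j. \<Sum>i<m. a i * v i j) {..<N} = restrict (\<lambda>j. \<Sum>i<m. b i * v i j) {..<N}"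
  have "\<forall>i<m. a i - b i \<in> K"
    using a b subfield_diff[OF K] by auto
  moreover have "\<forall>j<N. (\<Sum>i<m. (a i - b i) * v i j) = 0"
  proof (intro allI impI)
    fix j assume "j < N"
    then have "(\<Sum>i<m. a i * v i j) = (\<Sum>i<m. b i * v i j)"
      using fun_cong[OF eq, of j] by simp
    then show "(\<Sum>i<m. (a i - b i) * v i j) = 0"
      by (simp add: left_diff_distrib sum_subtractf)
  qed
  ultimately have "\<forall>i<m. a i - b i = 0"
    using indep[unfolded vecs_lin_indep_def, THEN spec[of _ "\<lambda>i. a i - b i"]] by blast
  then show "a = b"
    using a b by (intro PiE_ext) auto
qed

lemma vecs_lin_indep_in_hyperplane_less:
  fixes K :: "'a::field set"
  assumes K: "is_subfield K" "finite K" and c: "j0 < N" "c j0 \<noteq> 0"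
    and v: "\<forall>i<m. \<forall>j<N. v i j \<in> K" "\<forall>i<m. (\<Sum>j<N. c j * v i j) = 0"
    and indep: "vecs_lin_indep K m N v"
  shows "m < N"
proof -
  let ?S = "{w \<in> {..<N} \<rightarrow>\<^sub>E K. (\<Sum>j<N. c j * w j) = 0}"
    and ?comb = "\<lambda>a. restrict (\<lambda>j. \<Sum>i<m. a i * v i j) {..<N}"
  have "?comb ` ({..<m} \<rightarrow>\<^sub>E K) \<subseteq> ?S"
  proof
    fix w assume "w \<in> ?comb ` ({..<m} \<rightarrow>\<^sub>E K)"
    then obtain a where a: "a \<in> {..<m} \<rightarrow>\<^sub>E K" and w: "w = ?comb a"
      by blast
    have "\<forall>j<N. (\<Sum>i<m. a i * v i j) \<in> K"
      using a v(1) by (auto dest: PiE_mem intro!: subfield_sum[OF K(1)] subfield_mult[OF K(1)])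
    then have w_mem: "w \<in> {..<N} \<rightarrow>\<^sub>E K"
      by (simp add: w restrict_PiE_iff)
    have "(\<Sum>j<N. c j * w j) = (\<Sum>j<N. \<Sum>i<m. c j * (a i * v i j))"
      by (rule sum.cong) (simp_all add: w sum_distrib_left)
    also have "\<dots> = (\<Sum>i<m. a i * (\<Sum>j<N. c j * v i j))"
      by (subst sum.swap) (simp add: sum_distrib_left mult.left_commute)
    also have "\<dots> = 0"
      using v(2) by simp
    finally show "w \<in> ?S"
      using w_mem by simp
  qed
  moreover have "finite ?S"
    by (rule finite_subset[of _ "{..<N} \<rightarrow>\<^sub>E K"]) (use K(2) in \<open>auto intro: finite_PiE\<close>)
  ultimately have "card ({..<m} \<rightarrow>\<^sub>E K) \<le> card ?S"
    by (intro card_inj_on_le[OF inj_on_lin_comb[OF K(1) indep]])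
  also have "\<dots> \<le> card K ^ (N - 1)"
    using card_hyperplane_le[of K j0 N c] K(2) c by blast
  finally have le: "card K ^ m \<le> card K ^ (N - 1)"
    by (simp add: card_PiE)
  have "card {0, 1 :: 'a} \<le> card K"
    by (rule card_mono) (use K in \<open>auto simp: subfield_closed\<close>)
  then have "1 < card K"
    by simp
  then have "m \<le> N - 1"
    using power_le_imp_le_exp le by blast
  then show ?thesis
    using c(1) by linarith
qed

lemma dim_over_less_if_hyperplane:
  fixes K :: "'a::field set"
  assumes "is_subfield K" "finite K" "j0 < N" "c j0 \<noteq> 0"
    and C: "\<forall>w\<in>C. (\<forall>j<N. w j \<in> K) \<and> (\<Sum>j<N. c j * w j) = 0"
  shows "dim_over K N C < N"
proof -
  let ?T = "{m. \<exists>v. (\<forall>i<m. v i \<in> C) \<and> vecs_lin_indep K m N v}"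
  have T_bound: "?T \<subseteq> {..<N}"
  proof
    fix m assume "m \<in> ?T"
    then obtain v where "\<forall>i<m. v i \<in> C" "vecs_lin_indep K m N v"
      by blast
    then show "m \<in> {..<N}"
      using vecs_lin_indep_in_hyperplane_less[of K j0 N c m v] assms C by auto
  qed
  have "0 \<in> ?T"
    by (auto simp: vecs_lin_indep_def)
  then have "Max ?T \<in> ?T"
    using Max_in[OF finite_subset[OF T_bound finite_lessThan]] by blast
  then have "Max ?T \<in> {..<N}"
    using T_bound by blast
  then show ?thesis
    unfolding dim_over_def by simp
qed

lemma full_dim_row_span_orthogonal_zero:
  fixes K :: "'a::field set"
  assumes K: "is_subfield K" "finite K" and A: "\<forall>i<k. \<forall>j<k. A i j \<in> K"
    and dim: "dim_over K k (row_span K k k A) = k"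
    and c: "\<forall>i<k. (\<Sum>j<k. A i j * c j) = 0"
  shows "\<forall>j<k. c j = 0"
proof (rule ccontr)
  assume "\<not> (\<forall>j<k. c j = 0)"
  then obtain j0 where j0: "j0 < k" "c j0 \<noteq> 0"
    by blast
  have "(\<forall>j<k. w j \<in> K) \<and> (\<Sum>j<k. c j * w j) = 0" if hw: "w \<in> row_span K k k A" for w
  proof -
    obtain m where m: "\<forall>i<k. m i \<in> K" and w: "w = (\<lambda>j. if j < k then \<Sum>i<k. m i * A i j else 0)"
      using hw unfolding row_span_def by blast
    have "(\<Sum>j<k. c j * w j) = (\<Sum>j<k. \<Sum>i<k. m i * (A i j * c j))"
      by (rule sum.cong) (simp_all add: w sum_distrib_left mult_ac)
    also have "\<dots> = (\<Sum>i<k. m i * (\<Sum>j<k. A i j * c j))"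
      by (subst sum.swap) (simp add: sum_distrib_left)
    also have "\<dots> = 0"
      using c by simp
    finally have "(\<Sum>j<k. c j * w j) = 0" .
    moreover have "\<forall>j<k. w j \<in> K"
      using m A by (auto simp: w intro!: subfield_sum[OF K(1)] subfield_mult[OF K(1)])
    ultimately show ?thesis
      by blast
  qed
  then have "dim_over K k (row_span K k k A) < k"
    using dim_over_less_if_hyperplane[of K j0 k c] K j0 by blast
  then show False
    using dim by simp
qed

lemma elems_lin_indep_transform:
  fixes K :: "'a::field set"
  assumes K: "is_subfield K" and g: "elems_lin_indep K k g" and A: "\<forall>l<k. \<forall>j<k. A l j \<in> K"
    and ker: "\<forall>c. (\<forall>j<k. c j \<in> K) \<and> (\<forall>l<k. (\<Sum>j<k. A l j * c j) = 0) \<longrightarrow> (\<forall>j<k. c j = 0)"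
  shows "elems_lin_indep K k (\<lambda>j. \<Sum>l<k. g l * A l j)"
  unfolding elems_lin_indep_def
proof (rule allI, rule impI, elim conjE)
  fix c assume cK: "\<forall>j<k. c j \<in> K" and comb: "(\<Sum>j<k. c j * (\<Sum>l<k. g l * A l j)) = 0"
  define d where "d l = (\<Sum>j<k. A l j * c j)" for l
  have "(\<Sum>l<k. d l * g l) = (\<Sum>j<k. c j * (\<Sum>l<k. g l * A l j))"
    unfolding d_def sum_distrib_left sum_distrib_right
    by (subst sum.swap) (simp add: mult_ac)
  then have "(\<Sum>l<k. d l * g l) = 0"
    using comb by simp
  moreover have "\<forall>l<k. d l \<in> K"
    using A cK by (auto simp: d_def intro!: subfield_sum[OF K] subfield_mult[OF K])
  ultimately have "\<forall>l<k. d l = 0"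
    using g unfolding elems_lin_indep_def by simp
  then have "\<forall>l<k. (\<Sum>j<k. A l j * c j) = 0"
    by (simp add: d_def)
  then show "\<forall>j<k. c j = 0"
    using ker cK by simp
qed

subsection \<open>Restricting the concatenated code\<close>

lemma sorted_list_of_set_nth_less:
  fixes I :: "nat set"
  assumes "I \<subseteq> {..<N}" "j < card I"
  shows "sorted_list_of_set I ! j < N"
proof -
  have "finite I"
    using assms(1) by (rule finite_subset) simp
  then have "sorted_list_of_set I ! j \<in> I"
    using nth_mem[of j "sorted_list_of_set I"] assms(2) by simp
  then show ?thesis
    using assms(1) by blast
qed

lemma row_span_eq_image:
  "row_span F k N G = (\<lambda>m j. if j < N then \<Sum>i<k. m i * G i j else 0) ` {m. \<forall>i<k. m i \<in> F}"
  unfolding row_span_def by (rule image_Collect[symmetric])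

lemma restrict_code_row_span:
  assumes "I \<subseteq> {..<N}"
  shows "restrict_code I (row_span F k N G)
    = row_span F k (card I) (\<lambda>i j. G i (sorted_list_of_set I ! j))"
proof -
  have eq: "restrict_vec I (\<lambda>j. if j < N then \<Sum>i<k. m i * G i j else 0)
      = (\<lambda>j. if j < card I then \<Sum>i<k. m i * G i (sorted_list_of_set I ! j) else 0)" for m
    using sorted_list_of_set_nth_less[OF assms] by (auto simp: restrict_vec_def)
  show ?thesis
    by (simp add: restrict_code_def row_span_eq_image image_image eq)
qed

lemma row_span_cong:
  assumes "\<forall>i<k. \<forall>j<N. A i j = B i j"
  shows "row_span F k N A = row_span F k N B"
proof -
  have "(\<lambda>j. if j < N then \<Sum>i<k. m i * A i j else 0)
      = (\<lambda>j. if j < N then \<Sum>i<k. m i * B i j else 0)" for m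
    using assms by (auto intro!: sum.cong)
  then show ?thesis
    unfolding row_span_def by simp
qed

lemma mat_mult_gab_gen:
  fixes K :: "'a::{finite,field} set"
  assumes "is_subfield K" "card K = q" "\<forall>l<k. G l j \<in> K"
  shows "mat_mult k (gab_gen q g) G i j = gab_gen q (\<lambda>j. \<Sum>l<k. g l * G l j) i j"
  using frobenius_sum_subfield[OF assms(1), of "{..<k}" "\<lambda>l. G l j" g i] assms
  by (simp add: mat_mult_def gab_gen_def)

theorem lemma2:
  fixes K :: "'a::{finite,field} set"
    and q s n_out k_out k_in :: nat
    and G_out :: "nat \<Rightarrow> nat \<Rightarrow> 'a"
    and g :: "nat \<Rightarrow> 'a"
    and I :: "nat set"
  assumes "is_subfield K" and "card K = q" and "card (UNIV :: 'a set) = q ^ s"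
    and "\<forall>i<k_out. \<forall>j<n_out. G_out i j \<in> K"
    and "vecs_lin_indep K k_out n_out G_out"
    and "k_in \<le> k_out" and "k_out \<le> s"
    and "elems_lin_indep K k_out g"
    and "info_set K n_out k_out (row_span K k_out n_out G_out) I"
  shows "\<exists>g'. elems_lin_indep K k_out g' \<and>
           restrict_code I (row_span UNIV k_in n_out (mat_mult k_out (gab_gen q g) G_out))
             = gab_code q k_out k_in g'"
proof -
  have I: "I \<subseteq> {..<n_out}" "card I = k_out"
    and dim: "dim_over K k_out (restrict_code I (row_span K k_out n_out G_out)) = k_out"
    using assms(9) unfolding info_set_def by auto
  define G_I where "G_I = (\<lambda>i j. G_out i (sorted_list_of_set I ! j))"
  define g' where "g' j = (\<Sum>l<k_out. g l * G_I l j)" for j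
  have G_I_in_K: "\<forall>l<k_out. \<forall>j<k_out. G_I l j \<in> K"
    using assms(4) sorted_list_of_set_nth_less[OF I(1)] I(2) by (simp add: G_I_def)
  have "restrict_code I (row_span UNIV k_in n_out (mat_mult k_out (gab_gen q g) G_out))
      = row_span UNIV k_in k_out
          (\<lambda>i j. mat_mult k_out (gab_gen q g) G_out i (sorted_list_of_set I ! j))"
    using restrict_code_row_span[OF I(1)] I(2) by simp
  also have "\<dots> = gab_code q k_out k_in g'"
    unfolding gab_code_def
    using mat_mult_gab_gen[OF assms(1,2)] G_I_in_K
    by (intro row_span_cong) (simp add: G_I_def g'_def gab_gen_def)
  finally have code: "restrict_code I (row_span UNIV k_in n_out (mat_mult k_out (gab_gen q g) G_out))
      = gab_code q k_out k_in g'" .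
  have "dim_over K k_out (row_span K k_out k_out G_I) = k_out"
    using dim unfolding restrict_code_row_span[OF I(1)] I(2) G_I_def .
  then have "\<forall>c. (\<forall>j<k_out. c j \<in> K) \<and> (\<forall>l<k_out. (\<Sum>j<k_out. G_I l j * c j) = 0)
      \<longrightarrow> (\<forall>j<k_out. c j = 0)"
    using full_dim_row_span_orthogonal_zero[OF assms(1) finite G_I_in_K] by blast
  then have "elems_lin_indep K k_out g'"
    unfolding g'_def by (rule elems_lin_indep_transform[OF assms(1,8) G_I_in_K])
  with code show ?thesis
    by blast
qed

end
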